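(* Let $n\ge 1$ be an integer and suppose that $A\subseteq\mathbb{Z}_5^n$ is sum-free. If $|A|>\frac32\cdot5^{n-1}$ and $A$ is contained in a union of two cosets of a proper subgroup $H<\mathbb{Z}_5^n$, then there is an element $e\notin H$ such that $A\subseteq(e+H)\cup(-e+H)$.
   Context: $\mathbb{Z}_5^n$ denotes the elementary abelian $5$-group of rank $n$. A subset $S$ of an abelian group is sum-free if there are no $x,y,z\in S$ (not necessarily distinct) with $x+y=z$. *)

theory Defs
  imports "HOL-Analysis.Finite_Cartesian_Product" "HOL-Library.Numeral_Type"
begin

text \<open>The ambient group Z_5^n is modelled as the vector type 5 ^ 'n, where 'n is a
finite index type with CARD('n) = n (so n >= 1 automatically) and 5 is the ring Z/5Z.\<close>

definition sum_free :: "'a::plus set \<Rightarrow> bool" where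
  "sum_free S \<longleftrightarrow> (\<forall>x\<in>S. \<forall>y\<in>S. \<forall>z\<in>S. x + y \<noteq> z)"

definition is_subgroup :: "'a::ab_group_add set \<Rightarrow> bool" where
  "is_subgroup H \<longleftrightarrow> 0 \<in> H \<and> (\<forall>x\<in>H. \<forall>y\<in>H. x + y \<in> H) \<and> (\<forall>x\<in>H. - x \<in> H)"

definition coset :: "'a::plus \<Rightarrow> 'a set \<Rightarrow> 'a set" where
  "coset e H = (\<lambda>h. e + h) ` H"

end

theory Submission
  imports Defs "HOL-Number_Theory.Cong"
begin

text \<open>Split A into its parts in the cosets a + H and b + H. Since H is proper in a group of
exponent 5, |H| \<le> 5^(n-1), so the size bound forces each part to have more than |H|/2
elements. By pigeonhole the part in a + H then sums to all of 2a + H, and likewise for b, so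
sum-freeness excludes the cosets 2a + H and 2b + H from A. The size bound also rules out
a + H = b + H, and b outside the subgroup generated by H and a, since otherwise
|H| \<le> 5^(n-2). Writing b = r a modulo H, the excluded cosets give r \<noteq> 0, 1, 2 and 2r \<noteq> 1
modulo 5, leaving r = -1.\<close>

lemma subgroup_zero: "is_subgroup H \<Longrightarrow> 0 \<in> H"
  unfolding is_subgroup_def by blast

lemma subgroup_add: "is_subgroup H \<Longrightarrow> x \<in> H \<Longrightarrow> y \<in> H \<Longrightarrow> x + y \<in> H"
  unfolding is_subgroup_def by blast

lemma subgroup_uminus: "is_subgroup H \<Longrightarrow> x \<in> H \<Longrightarrow> - x \<in> H"
  unfolding is_subgroup_def by blast

lemma subgroup_diff: "is_subgroup H \<Longrightarrow> x \<in> H \<Longrightarrow> y \<in> H \<Longrightarrow> x - y \<in> H"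
  by (metis diff_conv_add_uminus subgroup_add subgroup_uminus)

lemma subgroup_add_right_iff: "is_subgroup H \<Longrightarrow> h \<in> H \<Longrightarrow> x + h \<in> H \<longleftrightarrow> x \<in> H"
  by (metis add_diff_cancel subgroup_add subgroup_diff)

lemma subgroup_of_int_mult:
  assumes "is_subgroup H" and "x \<in> H"
  shows "of_int k * (x::'a::ring_1) \<in> H"
proof (induction k rule: int_induct[where k = 0])
  case base
  then show ?case using assms(1) by (simp add: subgroup_zero)
next
  case (step1 k)
  then show ?case using assms by (simp add: distrib_right subgroup_add)
next
  case (step2 k)
  then show ?case using assms by (simp add: left_diff_distrib subgroup_diff)
qed

lemma mem_coset_iff: "w \<in> coset e H \<longleftrightarrow> w - (e::'a::ab_group_add) \<in> H"
  unfolding coset_def image_iff by (auto intro!: bexI[of _ "w - e"])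

lemma coset_eq_iff:
  assumes "is_subgroup H"
  shows "coset x H = coset y H \<longleftrightarrow> x - (y::'a::ab_group_add) \<in> H"
proof
  assume "coset x H = coset y H"
  moreover have "x \<in> coset x H"
    using assms by (simp add: mem_coset_iff subgroup_zero)
  ultimately show "x - y \<in> H"
    by (simp add: mem_coset_iff)
next
  assume "x - y \<in> H"
  have "w - x \<in> H \<longleftrightarrow> w - y \<in> H" for w
    using subgroup_add_right_iff[OF assms \<open>x - y \<in> H\<close>, of "w - x"] by simp
  then show "coset x H = coset y H"
    by (auto simp: mem_coset_iff)
qed

lemma card_coset: "card (coset e (H::'a::ab_group_add set)) = card H"
  unfolding coset_def by (rule card_image) (auto simp: inj_on_def)

lemma card_Int_coset_le: "card (A \<inter> coset e H) \<le> card (H::'a::{ab_group_add,finite} set)"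
  by (metis card_coset card_mono finite inf_le2)

lemma coset_subset_sumset:
  fixes X Y H :: "'a::{ab_group_add,finite} set"
  assumes "is_subgroup H" and X: "X \<subseteq> coset x H" and Y: "Y \<subseteq> coset y H"
    and card: "card H < card X + card Y"
  shows "coset (x + y) H \<subseteq> {u + v |u v. u \<in> X \<and> v \<in> Y}"
proof
  fix z assume z: "z \<in> coset (x + y) H"
  let ?Z = "(\<lambda>v. z - v) ` Y"
  have "?Z \<subseteq> coset x H"
  proof
    fix w assume "w \<in> ?Z"
    then obtain v where "v \<in> Y" "w = z - v" by auto
    then have "w - x = (z - (x + y)) - (v - y)" "v - y \<in> H"
      using Y by (auto simp: algebra_simps mem_coset_iff)
    moreover have "z - (x + y) \<in> H"
      using z by (simp add: mem_coset_iff)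
    ultimately show "w \<in> coset x H"
      using assms(1) by (metis mem_coset_iff subgroup_diff)
  qed
  then have "card (X \<union> ?Z) \<le> card H"
    using X card_mono[of "coset x H" "X \<union> ?Z"] by (simp add: card_coset)
  moreover have "card ?Z = card Y"
    by (rule card_image) (auto simp: inj_on_def)
  ultimately have "X \<inter> ?Z \<noteq> {}"
    using card card_Un_Int[of X ?Z] by auto
  then obtain u v where "u \<in> X" "v \<in> Y" "u = z - v" by auto
  then show "z \<in> {u + v |u v. u \<in> X \<and> v \<in> Y}" by force
qed

lemma sum_free_Int_double_coset:
  fixes A H :: "'a::{ab_group_add,finite} set"
  assumes "sum_free A" and "is_subgroup H" and "card H < 2 * card (A \<inter> coset x H)"
  shows "A \<inter> coset (x + x) H = {}"
proof -
  have "coset (x + x) H \<subseteq> {u + v |u v. u \<in> A \<inter> coset x H \<and> v \<in> A \<inter> coset x H}"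
    using assms(2,3) by (intro coset_subset_sumset) auto
  then show ?thesis
    using assms(1) unfolding sum_free_def by blast
qed

text \<open>The subgroup generated by H and x; the ring structure only serves to write the integer
multiples of x as of_int i * x.\<close>

definition adjoin :: "'a::ring_1 set \<Rightarrow> 'a \<Rightarrow> 'a set" where
  "adjoin H x = {of_int i * x + h |i h. h \<in> H}"

lemma is_subgroup_adjoin:
  assumes H: "is_subgroup H"
  shows "is_subgroup (adjoin H x)"
  unfolding is_subgroup_def
proof (intro conjI ballI)
  show "0 \<in> adjoin H x"
    using H unfolding adjoin_def by (auto intro!: exI[of _ 0] subgroup_zero)
next
  fix u v assume "u \<in> adjoin H x" "v \<in> adjoin H x"
  then obtain i g j h where "u = of_int i * x + g" "v = of_int j * x + h" "g \<in> H" "h \<in> H"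
    unfolding adjoin_def by auto
  then have "u + v = of_int (i + j) * x + (g + h)" "g + h \<in> H"
    using H by (auto simp: algebra_simps subgroup_add)
  then show "u + v \<in> adjoin H x"
    unfolding adjoin_def by blast
next
  fix u assume "u \<in> adjoin H x"
  then obtain i h where "u = of_int i * x + h" "h \<in> H"
    unfolding adjoin_def by auto
  then have "- u = of_int (- i) * x + - h" "- h \<in> H"
    using H by (auto simp: subgroup_uminus)
  then show "- u \<in> adjoin H x"
    unfolding adjoin_def by blast
qed

lemma of_int_mod_five:
  assumes "(5::'a::ring_1) = 0"
  shows "of_int (k mod 5) = (of_int k :: 'a)"
proof -
  have "(of_int k :: 'a) = of_int (k mod 5) + 5 * of_int (k div 5)"
    by (metis mod_mult_div_eq of_int_add of_int_mult of_int_numeral)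
  then show ?thesis
    using assms by simp
qed

lemma of_int_mult_mem_subgroup_iff:
  fixes a :: "'a::ring_1"
  assumes five: "(5::'a) = 0" and H: "is_subgroup H" and a: "a \<notin> H"
  shows "of_int k * a \<in> H \<longleftrightarrow> 5 dvd k"
proof
  assume ka: "of_int k * a \<in> H"
  show "5 dvd k"
  proof (rule ccontr)
    assume "\<not> 5 dvd k"
    then have "coprime k 5"
      using prime_imp_coprime[of "5::int" k] by (simp add: coprime_commute)
    then obtain c where "[k * c = 1] (mod 5)"
      using cong_solve_coprime_int by blast
    then have "(of_int (k * c) :: 'a) = 1"
      using of_int_mod_five[OF five, of "k * c"] by (simp add: cong_def)
    then have "of_int c * (of_int k * a) = a"
      by (simp flip: mult.assoc of_int_mult add: mult.commute)
    then show False
      using subgroup_of_int_mult[OF H ka, of c] a by simp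
  qed
next
  assume "5 dvd k"
  then have "(of_int k :: 'a) = 0"
    using of_int_mod_five[OF five, of k] by simp
  then show "of_int k * a \<in> H"
    using H by (simp add: subgroup_zero)
qed

lemma five_card_le_card_adjoin:
  fixes H :: "'a::{ring_1,finite} set"
  assumes five: "(5::'a) = 0" and H: "is_subgroup H" and x: "x \<notin> H"
  shows "5 * card H \<le> card (adjoin H x)"
proof -
  define C where "C i = coset (of_int i * x) H" for i :: int
  have disjoint: "C i \<inter> C j = {}" if "i \<in> {0..4}" "j \<in> {0..4}" "i \<noteq> j" for i j
  proof -
    have "0 \<le> i" "i \<le> 4" "0 \<le> j" "j \<le> 4"
      using that(1,2) by auto
    then have "\<not> 5 dvd (i - j)"
      using that(3) by presburger
    then have "of_int i * x - of_int j * x \<notin> H"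
      using of_int_mult_mem_subgroup_iff[OF five H x, of "i - j"] by (simp add: left_diff_distrib)
    then show ?thesis
      unfolding C_def using H by (auto simp: mem_coset_iff dest: subgroup_diff)
  qed
  have "5 * card H = (\<Sum>i\<in>{0..4}. card (C i))"
    by (simp add: C_def card_coset)
  also have "\<dots> = card (\<Union>i\<in>{0..4}. C i)"
    by (rule card_UN_disjoint[symmetric]) (use disjoint in auto)
  also have "\<dots> \<le> card (adjoin H x)"
    by (rule card_mono) (auto simp: C_def coset_def adjoin_def)
  finally show ?thesis .
qed

lemma five_card_proper_subgroup_le:
  fixes H :: "'a::{ring_1,finite} set"
  assumes "(5::'a) = 0" and "is_subgroup H" and "H \<noteq> UNIV"
  shows "5 * card H \<le> CARD('a)"
proof -
  obtain x where "x \<notin> H"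
    using assms(3) by blast
  then have "5 * card H \<le> card (adjoin H x)"
    by (rule five_card_le_card_adjoin[OF assms(1,2)])
  also have "\<dots> \<le> CARD('a)"
    by (rule card_mono) simp_all
  finally show ?thesis .
qed

lemma coset_eq_uminus_if_mem_adjoin:
  fixes a b :: "'a::ring_1"
  assumes five: "(5::'a) = 0" and H: "is_subgroup H" and a: "a \<notin> H" and b: "b \<in> adjoin H a"
    and "coset b H \<noteq> coset (b + b) H" and "coset b H \<noteq> coset a H"
    and "coset b H \<noteq> coset (a + a) H" and "coset a H \<noteq> coset (b + b) H"
  shows "coset b H = coset (- a) H"
proof -
  obtain r h where b_eq: "b = of_int r * a + h" and h: "h \<in> H"
    using b unfolding adjoin_def by blast
  have residue: "of_int m * a + g \<in> H \<longleftrightarrow> 5 dvd m" if "g \<in> H" for m g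
    using subgroup_add_right_iff[OF H that] of_int_mult_mem_subgroup_iff[OF five H a] by simp
  have non_members: "b - (b + b) \<notin> H" "b - a \<notin> H" "b - (a + a) \<notin> H" "a - (b + b) \<notin> H"
    using assms(5-8) by (simp_all add: coset_eq_iff[OF H])
  have residues:
    "b - (b + b) = of_int (- r) * a + - h"
    "b - a = of_int (r - 1) * a + h"
    "b - (a + a) = of_int (r - 2) * a + h"
    "a - (b + b) = of_int (1 - 2 * r) * a + (- h - h)"
    "b - - a = of_int (r + 1) * a + h"
    unfolding b_eq by (simp_all add: algebra_simps mult_2)
  have "- h \<in> H" "- h - h \<in> H"
    using H h by (simp_all add: subgroup_diff subgroup_uminus)
  then have "\<not> 5 dvd (- r)" "\<not> 5 dvd (r - 1)" "\<not> 5 dvd (r - 2)" "\<not> 5 dvd (1 - 2 * r)"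
    using non_members h unfolding residues by (simp_all only: residue not_False_eq_True)
  then have "5 dvd (r + 1)"
    by presburger
  then show ?thesis
    using h by (simp only: coset_eq_iff[OF H] residues residue)
qed

theorem sum_free_subset_two_cosets:
  fixes A H :: "'a::{ring_1,finite} set"
  assumes five: "(5::'a) = 0" and "sum_free A" and big: "3 * CARD('a) < 10 * card A"
    and H: "is_subgroup H" "H \<noteq> UNIV" and A: "A \<subseteq> coset a H \<union> coset b H"
  shows "a \<notin> H \<and> A \<subseteq> coset a H \<union> coset (- a) H"
proof -
  have index: "5 * card H \<le> CARD('a)"
    using five H by (rule five_card_proper_subgroup_le)
  have "card A \<le> card (A \<inter> coset a H) + card (A \<inter> coset b H)"
    using A card_Un_le[of "A \<inter> coset a H" "A \<inter> coset b H"]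
    by (simp add: Int_absorb2 flip: Int_Un_distrib)
  moreover have "card (A \<inter> coset a H) \<le> card H" "card (A \<inter> coset b H) \<le> card H"
    by (simp_all add: card_Int_coset_le)
  ultimately have A_le: "card A \<le> 2 * card H"
    and halves: "card H < 2 * card (A \<inter> coset a H)" "card H < 2 * card (A \<inter> coset b H)"
    using big index by linarith+
  then have "A \<inter> coset (a + a) H = {}" "A \<inter> coset (b + b) H = {}"
    using assms(2) H(1) by (simp_all add: sum_free_Int_double_coset)
  moreover have "A \<inter> coset a H \<noteq> {}" "A \<inter> coset b H \<noteq> {}"
    using halves by auto
  ultimately have a_2a: "coset a H \<noteq> coset (a + a) H" and b_2b: "coset b H \<noteq> coset (b + b) H"
    and b_2a: "coset b H \<noteq> coset (a + a) H" and a_2b: "coset a H \<noteq> coset (b + b) H"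
    by auto
  have a: "a \<notin> H"
    using a_2a H(1) by (auto simp: coset_eq_iff subgroup_uminus)
  have b_a: "coset b H \<noteq> coset a H"
  proof
    assume "coset b H = coset a H"
    then have "card A \<le> card H"
      using A card_Int_coset_le[of A a H] by (simp add: Int_absorb2)
    then show False
      using big index by linarith
  qed
  have "b \<in> adjoin H a"
  proof (rule ccontr)
    assume "b \<notin> adjoin H a"
    then have "5 * card (adjoin H a) \<le> CARD('a)"
      using five is_subgroup_adjoin[OF H(1)] by (blast intro: five_card_proper_subgroup_le)
    moreover have "5 * card H \<le> card (adjoin H a)"
      using five H(1) a by (rule five_card_le_card_adjoin)
    ultimately show False
      using A_le big by linarith
  qed
  then have "coset b H = coset (- a) H"
    using coset_eq_uminus_if_mem_adjoin[OF five H(1) a _ b_2b b_a b_2a a_2b] by blast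
  then show ?thesis
    using A a by auto
qed

theorem lemma1:
  fixes A H :: "(5 ^ 'n) set"
  assumes "sum_free A"
    and "real (card A) > 3 / 2 * 5 ^ (CARD('n) - 1)"
    and "is_subgroup H" and "H \<noteq> UNIV"
    and "\<exists>a b. A \<subseteq> coset a H \<union> coset b H"
  shows "\<exists>e. e \<notin> H \<and> A \<subseteq> coset e H \<union> coset (- e) H"
proof -
  obtain a b where ab: "A \<subseteq> coset a H \<union> coset b H"
    using assms(5) by blast
  have five: "(5 :: 5 ^ 'n) = 0"
    by (simp add: vec_eq_iff)
  obtain m where "CARD('n) = Suc m"
    using not0_implies_Suc by fastforce
  then have "real (3 * CARD(5 ^ 'n)) < real (10 * card A)"
    using assms(2) by simp
  then have "3 * CARD(5 ^ 'n) < 10 * card A"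
    by (simp only: of_nat_less_iff)
  then show ?thesis
    using sum_free_subset_two_cosets[OF five assms(1) _ assms(3,4) ab] by blast
qed

end
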